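(* Let $m\le n$ and $1\le k\le m$. Suppose $X = X^*$ is a nonzero $k$-block positive operator on $\mathcal{H}_n\otimes\mathcal{H}_m$, with maximal eigenvalue $\lambda_{max}$ and minimal eigenvalue $\lambda_{min}$. Then \[ \frac{\lambda_{min}}{\lambda_{max}} \ge 1 - \frac{m}{k}. \]
   Context: $\mathcal{H}_d=\mathbb{C}^d$ and $m\le n$. The Schmidt rank $SR(|v\rangle)$ of $|v\rangle\in\mathcal{H}_n\otimes\mathcal{H}_m$ is the rank of its coefficient matrix. A Hermitian $X$ is $k$-block positive if $\langle v|X|v\rangle\ge0$ for all $|v\rangle$ with $SR(|v\rangle)\le k$. Equivalently, the map associated to $X$ via the Choi–Jamiołkowski isomorphism is $k$-positive. *)

theory Defs
  imports "Jordan_Normal_Form.Schur_Decomposition" "Jordan_Normal_Form.DL_Rank"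
begin

text \<open>A vector v in C^n (x) C^m is a vector of length n*m; basis index of e_i (x) f_j is i*m + j.
  Its coefficient matrix is the n x m matrix with entries v_(i*m+j).\<close>
definition coeff_mat :: "nat \<Rightarrow> nat \<Rightarrow> complex vec \<Rightarrow> complex mat" where
  "coeff_mat n m v = mat n m (\<lambda>(i,j). v $ (i * m + j))"

definition schmidt_rank :: "nat \<Rightarrow> nat \<Rightarrow> complex vec \<Rightarrow> nat" where
  "schmidt_rank n m v = vec_space.rank n (coeff_mat n m v)"

definition hermitian :: "complex mat \<Rightarrow> bool" where
  "hermitian X \<longleftrightarrow> mat_adjoint X = X"

definition k_block_positive :: "nat \<Rightarrow> nat \<Rightarrow> nat \<Rightarrow> complex mat \<Rightarrow> bool" where
  "k_block_positive n m k X \<longleftrightarrow> hermitian X \<and>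
     (\<forall>v \<in> carrier_vec (n * m). schmidt_rank n m v \<le> k \<longrightarrow> Re ((X *\<^sub>v v) \<bullet>c v) \<ge> 0)"

text \<open>For a Hermitian matrix all eigenvalues are real.\<close>
definition lambda_max :: "complex mat \<Rightarrow> real" where
  "lambda_max X = Max {r :: real. eigenvalue X (complex_of_real r)}"

definition lambda_min :: "complex mat \<Rightarrow> real" where
  "lambda_min X = Min {r :: real. eigenvalue X (complex_of_real r)}"

end

theory Submission
  imports Defs "Jordan_Normal_Form.Spectral_Radius"
begin

text \<open>Let v be an eigenvector of X for lambda_min. By the Rayleigh bound (proved by unitary
  deflation), K = lambda_max I - X is positive semidefinite. Cut the m columns of the coefficient
  matrix of v into the m cyclic windows of k consecutive columns and restrict v to each of them:
  the restrictions w_j have Schmidt rank at most k, and every column lies in exactly k windows, so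
  sum_j w_j = k v and sum_j |w_j|^2 = k |v|^2. Positivity of K gives
  <K sum_j w_j, sum_j w_j> <= m sum_j <K w_j, w_j>, and k-block positivity gives
  <K w_j, w_j> <= lambda_max |w_j|^2. Together k^2 (lambda_max - lambda_min) |v|^2 <= m k lambda_max |v|^2,
  which rearranges to the bound.\<close>

lemma cscalar_prod_sum: "dim_vec y = N \<Longrightarrow> x \<bullet>c y = (\<Sum>i<N. x $ i * cnj (y $ i))"
  unfolding scalar_prod_def by (auto simp: atLeast0LessThan)

lemma mult_mat_vec_index_sum:
  "A \<in> carrier_mat N M \<Longrightarrow> i < N \<Longrightarrow> dim_vec u = M \<Longrightarrow> (A *\<^sub>v u) $ i = (\<Sum>j<M. A $$ (i,j) * u $ j)"
  by (auto simp: scalar_prod_def atLeast0LessThan)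

lemma cscalar_form_sum:
  assumes "A \<in> carrier_mat N N" "x \<in> carrier_vec N" "y \<in> carrier_vec N"
  shows "(A *\<^sub>v x) \<bullet>c y = (\<Sum>p<N. \<Sum>q<N. A $$ (p,q) * x $ q * cnj (y $ p))"
  using assms by (simp add: cscalar_prod_sum scalar_prod_def atLeast0LessThan sum_distrib_right)

lemma cscalar_prod_smult:
  fixes x y :: "complex vec"
  assumes "x \<in> carrier_vec N" "y \<in> carrier_vec N"
  shows "(a \<cdot>\<^sub>v x) \<bullet>c (b \<cdot>\<^sub>v y) = a * cnj b * (x \<bullet>c y)"
  using assms by (simp add: cscalar_prod_sum sum_distrib_left mult_ac)

lemma cscalar_prod_self_real:
  fixes x :: "complex vec"
  shows "x \<bullet>c x = complex_of_real (Re (x \<bullet>c x))" and "Re (x \<bullet>c x) \<ge> 0"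
  using conjugate_square_ge_0_vec[of x] by (auto simp: less_eq_complex_def complex_eq_iff)

lemma dim_mat_adjoint [simp]:
  fixes A :: "complex mat"
  shows "dim_row (mat_adjoint A) = dim_col A" "dim_col (mat_adjoint A) = dim_row A"
  by (simp_all add: mat_adjoint_def)

lemma mat_adjoint_index [simp]:
  fixes A :: "complex mat"
  shows "i < dim_col A \<Longrightarrow> j < dim_row A \<Longrightarrow> mat_adjoint A $$ (i,j) = cnj (A $$ (j,i))"
  by (simp add: mat_adjoint_def mat_of_rows_index)

lemma mat_adjoint_carrier [simp]:
  "(A :: complex mat) \<in> carrier_mat n m \<Longrightarrow> mat_adjoint A \<in> carrier_mat m n"
  by auto

lemma mat_adjoint_adjoint [simp]: "mat_adjoint (mat_adjoint A) = (A :: complex mat)"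
  by (rule eq_matI) auto

lemma mat_adjoint_mult:
  fixes A B :: "complex mat"
  assumes "A \<in> carrier_mat n l" "B \<in> carrier_mat l m"
  shows "mat_adjoint (A * B) = mat_adjoint B * mat_adjoint A"
  using assms by (intro eq_matI) (auto simp: scalar_prod_def mult.commute intro: sum.cong)

lemma cscalar_prod_mat_adjoint:
  fixes W :: "complex mat"
  assumes W: "W \<in> carrier_mat n m" and "a \<in> carrier_vec n" "y \<in> carrier_vec m"
  shows "a \<bullet>c (W *\<^sub>v y) = (mat_adjoint W *\<^sub>v a) \<bullet>c y"
proof -
  have "a \<bullet>c (W *\<^sub>v y) = (\<Sum>p<n. \<Sum>q<m. a $ p * cnj (W $$ (p,q)) * cnj (y $ q))"
    using assms by (simp add: cscalar_prod_sum scalar_prod_def atLeast0LessThan sum_distrib_left mult.assoc)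
  also have "\<dots> = (\<Sum>q<m. \<Sum>p<n. a $ p * cnj (W $$ (p,q)) * cnj (y $ q))"
    by (rule sum.swap)
  also have "\<dots> = (mat_adjoint W *\<^sub>v a) \<bullet>c y"
    using assms by (simp add: cscalar_prod_sum scalar_prod_def atLeast0LessThan sum_distrib_left mult_ac)
  finally show ?thesis .
qed

lemma hermitian_index:
  "hermitian A \<Longrightarrow> A \<in> carrier_mat N N \<Longrightarrow> i < N \<Longrightarrow> j < N \<Longrightarrow> A $$ (i,j) = cnj (A $$ (j,i))"
  unfolding hermitian_def by (metis carrier_matD mat_adjoint_index)

lemma hermitian_cscalar_prod:
  assumes "hermitian A" "A \<in> carrier_mat N N" "x \<in> carrier_vec N" "y \<in> carrier_vec N"
  shows "(A *\<^sub>v x) \<bullet>c y = x \<bullet>c (A *\<^sub>v y)"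
  using assms cscalar_prod_mat_adjoint[of A N N x y] unfolding hermitian_def by simp

lemma hermitian_eigenvalue_real:
  assumes A: "A \<in> carrier_mat N N" and "hermitian A" and "eigenvalue A e"
  shows "e = complex_of_real (Re e)"
proof -
  obtain v where v: "v \<in> carrier_vec N" "v \<noteq> 0\<^sub>v N" "A *\<^sub>v v = e \<cdot>\<^sub>v v"
    using assms unfolding eigenvalue_def eigenvector_def by auto
  have "e * (v \<bullet>c v) = cnj e * (v \<bullet>c v)"
    using hermitian_cscalar_prod[OF assms(2) A v(1) v(1)] v by (simp add: conjugate_smult_vec)
  moreover have "v \<bullet>c v \<noteq> 0" using v by simp
  ultimately have "cnj e = e" by simp
  then show ?thesis by (metis Reals_cnj_iff Re_complex_of_real Reals_cases)
qed

lemma mat_adjoint_mult_self_index: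
  fixes W :: "complex mat"
  assumes "W \<in> carrier_mat n m" "i < m" "j < m"
  shows "(mat_adjoint W * W) $$ (i,j) = col W j \<bullet>c col W i"
  using assms by (simp add: scalar_prod_def mult.commute)

section \<open>Unitary congruence\<close>

lemma normalizing_factor:
  fixes w :: "complex vec"
  assumes "w \<in> carrier_vec n" "w \<noteq> 0\<^sub>v n"
  defines "s \<equiv> complex_of_real (1 / sqrt (Re (w \<bullet>c w)))"
  shows "s * cnj s * (w \<bullet>c w) = 1"
proof -
  define r where "r = Re (w \<bullet>c w)"
  have ww: "w \<bullet>c w = complex_of_real r"
    unfolding r_def by (rule cscalar_prod_self_real)
  with assms(1,2) have "r > 0"
    using cscalar_prod_self_real(2)[of w] by (fastforce simp: r_def)
  then have "1 / sqrt r * (1 / sqrt r) * r = 1"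
    by (simp add: field_simps)
  then show ?thesis
    unfolding s_def r_def[symmetric] ww by (simp flip: of_real_mult)
qed

lemma unitary_completion:
  fixes v :: "complex vec"
  assumes v: "v \<in> carrier_vec n" "v \<noteq> 0\<^sub>v n"
  obtains W c where "W \<in> carrier_mat n n" "mat_adjoint W * W = 1\<^sub>m n" "col W 0 = c \<cdot>\<^sub>v v"
proof -
  interpret cof_vec_space n "TYPE(complex)" .
  note bc = basis_completion[OF v]
  define ws where "ws = gram_schmidt n (basis_completion v)"
  note gs = gram_schmidt_result[OF bc(2) bc(4) bc(5) ws_def]
  have n0: "n > 0" using v by (metis gr_zeroI carrier_vecD vec_of_dim_0)
  have hd_ws: "hd ws = v"
    using bc(6,7) n0 unfolding ws_def by (metis gram_schmidt_hd list.collapse list.size(3) neq0_conv v(1))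
  define s where "s w = complex_of_real (1 / sqrt (Re (w \<bullet>c w)))" for w :: "complex vec"
  define W where "W = mat_of_cols n (map (\<lambda>w. s w \<cdot>\<^sub>v w) ws)"
  have len: "length ws = n" using gs(4) bc(6) by simp
  have ws: "ws ! i \<in> carrier_vec n" if "i < n" for i using gs(3) len that by auto
  have W: "W \<in> carrier_mat n n" unfolding W_def using len by (metis length_map mat_of_cols_carrier(1))
  have col_W: "col W i = s (ws ! i) \<cdot>\<^sub>v ws ! i" if "i < n" for i
    unfolding W_def using that len ws by simp
  have "mat_adjoint W * W = 1\<^sub>m n"
  proof (rule eq_matI)
    fix i j assume ij: "i < dim_row (1\<^sub>m n)" "j < dim_col (1\<^sub>m n)"
    then have i: "i < n" and j: "j < n" by auto
    then have nz: "ws ! i \<noteq> 0\<^sub>v n" using gs(2) len ws by (metis conjugate_square_eq_0_vec corthogonalD)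
    have "(mat_adjoint W * W) $$ (i,j) = col W j \<bullet>c col W i"
      using i j by (rule mat_adjoint_mult_self_index[OF W])
    also have "\<dots> = s (ws ! j) * cnj (s (ws ! i)) * (ws ! j \<bullet>c ws ! i)"
      unfolding col_W[OF i] col_W[OF j] by (rule cscalar_prod_smult[OF ws[OF j] ws[OF i]])
    also have "\<dots> = 1\<^sub>m n $$ (i,j)"
      using i j gs(2) len normalizing_factor[OF ws[OF i] nz] by (auto simp: s_def corthogonal_def)
    finally show "(mat_adjoint W * W) $$ (i,j) = 1\<^sub>m n $$ (i,j)" .
  qed (use W in auto)
  moreover have "col W 0 = s v \<cdot>\<^sub>v v"
    using col_W[OF n0] hd_ws len n0 by (metis hd_conv_nth list.size(3) not_less_zero)
  ultimately show ?thesis using that W by blast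
qed

lemma hermitian_unitary_congruence:
  fixes A W :: "complex mat"
  assumes "hermitian A" "A \<in> carrier_mat n n" "W \<in> carrier_mat n n"
  shows "hermitian (mat_adjoint W * A * W)"
  using assms unfolding hermitian_def
  by (simp add: mat_adjoint_mult[of _ n n _ n] assoc_mult_mat[of _ n n _ n _ n])

lemma eigenvalue_unitary_congruence:
  fixes A W :: "complex mat"
  assumes A: "A \<in> carrier_mat n n" and W: "W \<in> carrier_mat n n" and WW: "mat_adjoint W * W = 1\<^sub>m n"
  shows "eigenvalue (mat_adjoint W * A * W) e \<longleftrightarrow> eigenvalue A e"
proof -
  have WH: "mat_adjoint W \<in> carrier_mat n n" using W by simp
  have "W * mat_adjoint W = 1\<^sub>m n"
    by (rule mat_mult_left_right_inverse[OF WH W WW])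
  then have "similar_mat (mat_adjoint W * A * W) A"
    using A W WH WW by (intro similar_matI[where n = n]) auto
  moreover have "mat_adjoint W * A * W \<in> carrier_mat n n"
    using mult_carrier_mat[OF mult_carrier_mat[OF WH A] W] .
  ultimately show ?thesis
    using A by (simp add: eigenvalue_root_char_poly char_poly_similar)
qed

lemma unitary_congruence_first_column:
  fixes A W :: "complex mat"
  assumes A: "A \<in> carrier_mat n n" and W: "W \<in> carrier_mat n n" and WW: "mat_adjoint W * W = 1\<^sub>m n"
    and ev: "A *\<^sub>v col W 0 = e \<cdot>\<^sub>v col W 0" and i: "i < n"
  shows "(mat_adjoint W * A * W) $$ (i,0) = (if i = 0 then e else 0)"
proof -
  have n0: "0 < n" using i by simp
  have WH: "mat_adjoint W \<in> carrier_mat n n" using W by simp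
  have "col (mat_adjoint W * A * W) 0 = mat_adjoint W *\<^sub>v col (A * W) 0"
    using n0 by (simp add: assoc_mult_mat[OF WH A W] col_mult2[OF WH mult_carrier_mat[OF A W]])
  also have "\<dots> = mat_adjoint W *\<^sub>v (e \<cdot>\<^sub>v col W 0)"
    using col_mult2[OF A W n0] by (simp add: ev)
  also have "\<dots> = e \<cdot>\<^sub>v (mat_adjoint W *\<^sub>v col W 0)"
    using W n0 by (intro mult_mat_vec[OF WH]) simp
  also have "\<dots> = e \<cdot>\<^sub>v col (1\<^sub>m n) 0"
    using col_mult2[OF WH W n0] by (simp add: WW)
  finally have "col (mat_adjoint W * A * W) 0 $ i = e * (if i = 0 then 1 else 0)"
    using i n0 by simp
  then show ?thesis
    using A W i by simp
qed

lemma cscalar_form_bound_unitary_congruence: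
  fixes A W :: "complex mat"
  assumes A: "A \<in> carrier_mat n n" and W: "W \<in> carrier_mat n n" and WW: "mat_adjoint W * W = 1\<^sub>m n"
    and bound: "\<And>y. y \<in> carrier_vec n \<Longrightarrow>
      Re ((mat_adjoint W * A * W *\<^sub>v y) \<bullet>c y) \<le> M * Re (y \<bullet>c y)"
    and u: "u \<in> carrier_vec n"
  shows "Re ((A *\<^sub>v u) \<bullet>c u) \<le> M * Re (u \<bullet>c u)"
proof -
  have WH: "mat_adjoint W \<in> carrier_mat n n" using W by simp
  define y where "y = mat_adjoint W *\<^sub>v u"
  have y: "y \<in> carrier_vec n" unfolding y_def using mult_mat_vec_carrier[OF WH u] .
  have "W * mat_adjoint W = 1\<^sub>m n"
    by (rule mat_mult_left_right_inverse[OF WH W WW])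
  then have u_eq: "u = W *\<^sub>v y"
    unfolding y_def using u by (simp flip: assoc_mult_mat_vec[OF W WH u])
  have "(A *\<^sub>v u) \<bullet>c u = (mat_adjoint W *\<^sub>v (A *\<^sub>v (W *\<^sub>v y))) \<bullet>c y"
    unfolding u_eq using A W y by (intro cscalar_prod_mat_adjoint[OF W]) auto
  also have "\<dots> = (mat_adjoint W * A * W *\<^sub>v y) \<bullet>c y"
    using assoc_mult_mat_vec[OF mult_carrier_mat[OF WH A] W y]
      assoc_mult_mat_vec[OF WH A mult_mat_vec_carrier[OF W y]] by simp
  finally have "(A *\<^sub>v u) \<bullet>c u = (mat_adjoint W * A * W *\<^sub>v y) \<bullet>c y" .
  moreover have "u \<bullet>c u = y \<bullet>c y"
    unfolding u_eq using cscalar_prod_mat_adjoint[OF W mult_mat_vec_carrier[OF W y] y]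
    by (simp add: WW y flip: assoc_mult_mat_vec[OF WH W y])
  ultimately show ?thesis using bound[OF y] by simp
qed

section \<open>The Rayleigh bound\<close>

definition delete_first_row_col :: "'a mat \<Rightarrow> 'a mat" where
  "delete_first_row_col C = mat (dim_row C - 1) (dim_col C - 1) (\<lambda>(i,j). C $$ (Suc i, Suc j))"

lemma dim_delete_first_row_col [simp]:
  "dim_row (delete_first_row_col C) = dim_row C - 1" "dim_col (delete_first_row_col C) = dim_col C - 1"
  unfolding delete_first_row_col_def by simp_all

lemma delete_first_row_col_carrier [simp]:
  "C \<in> carrier_mat (Suc N) (Suc N) \<Longrightarrow> delete_first_row_col C \<in> carrier_mat N N"
  unfolding delete_first_row_col_def by simp

lemma delete_first_row_col_index [simp]:
  "C \<in> carrier_mat (Suc N) (Suc N) \<Longrightarrow> i < N \<Longrightarrow> j < N \<Longrightarrow>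
    delete_first_row_col C $$ (i,j) = C $$ (Suc i, Suc j)"
  unfolding delete_first_row_col_def by simp

lemma hermitian_delete_first_row_col:
  assumes "hermitian C" "C \<in> carrier_mat (Suc N) (Suc N)"
  shows "hermitian (delete_first_row_col C)"
  unfolding hermitian_def
proof (rule eq_matI)
  fix i j assume "i < dim_row (delete_first_row_col C)" "j < dim_col (delete_first_row_col C)"
  then show "mat_adjoint (delete_first_row_col C) $$ (i,j) = delete_first_row_col C $$ (i,j)"
    using assms(2) hermitian_index[OF assms, of "Suc j" "Suc i"] by simp
qed (use assms(2) in simp_all)

lemma eigenvalue_delete_first_row_col:
  fixes C :: "complex mat"
  assumes C: "C \<in> carrier_mat (Suc N) (Suc N)" and row: "\<And>j. 0 < j \<Longrightarrow> j < Suc N \<Longrightarrow> C $$ (0,j) = 0"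
    and ev: "eigenvalue (delete_first_row_col C) e"
  shows "eigenvalue C e"
proof -
  obtain y where y: "y \<in> carrier_vec N" "y \<noteq> 0\<^sub>v N" "delete_first_row_col C *\<^sub>v y = e \<cdot>\<^sub>v y"
    using ev C unfolding eigenvalue_def eigenvector_def by auto
  define z where "z = vec (Suc N) (\<lambda>i. if i = 0 then 0 else y $ (i - 1))"
  have z: "z \<in> carrier_vec (Suc N)" unfolding z_def by simp
  have "C *\<^sub>v z = e \<cdot>\<^sub>v z"
  proof (rule eq_vecI)
    fix p assume "p < dim_vec (e \<cdot>\<^sub>v z)"
    then have p: "p < Suc N" by (simp add: z_def)
    have "(C *\<^sub>v z) $ p = (\<Sum>q<Suc N. C $$ (p,q) * z $ q)"
      using C p z by (intro mult_mat_vec_index_sum) auto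
    also have "\<dots> = (\<Sum>q<N. C $$ (p, Suc q) * y $ q)"
      by (simp add: sum.lessThan_Suc_shift z_def del: sum.lessThan_Suc)
    also have "\<dots> = (e \<cdot>\<^sub>v z) $ p"
    proof (cases p)
      case 0
      then show ?thesis using row by (simp add: z_def)
    next
      case (Suc p')
      then have "(\<Sum>q<N. C $$ (p, Suc q) * y $ q) = (delete_first_row_col C *\<^sub>v y) $ p'"
        using C p y by (subst mult_mat_vec_index_sum[of _ N N]) auto
      then show ?thesis using Suc p y by (simp add: z_def)
    qed
    finally show "(C *\<^sub>v z) $ p = (e \<cdot>\<^sub>v z) $ p" .
  qed (use C in \<open>simp add: z_def\<close>)
  moreover have "z \<noteq> 0\<^sub>v (Suc N)"
  proof
    assume z0: "z = 0\<^sub>v (Suc N)"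
    have "y = 0\<^sub>v N"
    proof (rule eq_vecI)
      fix i assume "i < dim_vec (0\<^sub>v N :: complex vec)"
      then have "z $ Suc i = y $ i" by (simp add: z_def)
      then show "y $ i = 0\<^sub>v N $ i" using z0 \<open>i < dim_vec (0\<^sub>v N)\<close> by simp
    qed (use y(1) in simp)
    with y(2) show False ..
  qed
  ultimately show ?thesis using C z unfolding eigenvalue_def eigenvector_def by auto
qed

lemma cscalar_form_bound_delete_first_row_col:
  fixes C :: "complex mat"
  assumes C: "C \<in> carrier_mat (Suc N) (Suc N)"
    and col: "\<And>i. i < Suc N \<Longrightarrow> C $$ (i,0) = (if i = 0 then complex_of_real r else 0)"
    and row: "\<And>j. j < Suc N \<Longrightarrow> C $$ (0,j) = (if j = 0 then complex_of_real r else 0)"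
    and "r \<le> M"
    and bound: "\<And>z. z \<in> carrier_vec N \<Longrightarrow>
      Re ((delete_first_row_col C *\<^sub>v z) \<bullet>c z) \<le> M * Re (z \<bullet>c z)"
    and y: "y \<in> carrier_vec (Suc N)"
  shows "Re ((C *\<^sub>v y) \<bullet>c y) \<le> M * Re (y \<bullet>c y)"
proof -
  define z where "z = vec N (\<lambda>i. y $ Suc i)"
  have z: "z \<in> carrier_vec N" unfolding z_def by simp
  define t where "t = Re (y $ 0 * cnj (y $ 0))"
  have "(C *\<^sub>v y) \<bullet>c y = complex_of_real r * (y $ 0 * cnj (y $ 0)) + (delete_first_row_col C *\<^sub>v z) \<bullet>c z"
    using C col row z y
    by (simp add: cscalar_form_sum[of _ "Suc N"] cscalar_form_sum[of _ N] sum.lessThan_Suc_shift z_def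
        del: sum.lessThan_Suc)
  then have "Re ((C *\<^sub>v y) \<bullet>c y) = r * t + Re ((delete_first_row_col C *\<^sub>v z) \<bullet>c z)"
    by (simp add: t_def)
  also have "\<dots> \<le> M * t + M * Re (z \<bullet>c z)"
    using bound[OF z] \<open>r \<le> M\<close> by (intro add_mono mult_right_mono) (auto simp: t_def)
  also have "\<dots> = M * Re (y \<bullet>c y)"
    using y by (simp add: cscalar_prod_sum sum.lessThan_Suc_shift t_def z_def algebra_simps del: sum.lessThan_Suc)
  finally show ?thesis .
qed

theorem hermitian_cscalar_form_le:
  fixes A :: "complex mat"
  assumes "A \<in> carrier_mat N N" "hermitian A" "\<And>r. eigenvalue A (complex_of_real r) \<Longrightarrow> r \<le> M"
    and "u \<in> carrier_vec N"
  shows "Re ((A *\<^sub>v u) \<bullet>c u) \<le> M * Re (u \<bullet>c u)"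
  using assms
proof (induction N arbitrary: A u)
  case 0
  then show ?case by (simp add: cscalar_prod_sum)
next
  case (Suc N)
  note A = Suc.prems(1) and herm = Suc.prems(2)
  obtain e where "eigenvalue A e"
    using spectrum_non_empty[OF A] unfolding spectrum_def by auto
  then obtain v where v: "v \<in> carrier_vec (Suc N)" "v \<noteq> 0\<^sub>v (Suc N)" "A *\<^sub>v v = e \<cdot>\<^sub>v v"
    using A unfolding eigenvalue_def eigenvector_def by auto
  define r where "r = Re e"
  have e: "e = complex_of_real r"
    unfolding r_def by (rule hermitian_eigenvalue_real[OF A herm \<open>eigenvalue A e\<close>])
  have "r \<le> M" using Suc.prems(3) \<open>eigenvalue A e\<close> by (simp flip: e)
  obtain W c where W: "W \<in> carrier_mat (Suc N) (Suc N)" and WW: "mat_adjoint W * W = 1\<^sub>m (Suc N)"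
    and W0: "col W 0 = c \<cdot>\<^sub>v v"
    using unitary_completion[OF v(1,2)] by blast
  have "A *\<^sub>v col W 0 = e \<cdot>\<^sub>v col W 0"
    using A v unfolding W0 by (simp add: mult_mat_vec[OF A] smult_smult_assoc mult.commute)
  note col = unitary_congruence_first_column[OF A W WW this, unfolded e]
  define C where "C = mat_adjoint W * A * W"
  have C: "C \<in> carrier_mat (Suc N) (Suc N)"
    unfolding C_def using A W by (metis mat_adjoint_carrier mult_carrier_mat)
  have herm_C: "hermitian C"
    unfolding C_def by (rule hermitian_unitary_congruence[OF herm A W])
  have row: "C $$ (0,j) = (if j = 0 then complex_of_real r else 0)" if "j < Suc N" for j
    using hermitian_index[OF herm_C C _ that, of 0] col[OF that] unfolding C_def by simp
  have "r' \<le> M" if "eigenvalue (delete_first_row_col C) (complex_of_real r')" for r'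
    using eigenvalue_delete_first_row_col[OF C _ that] row Suc.prems(3)
      eigenvalue_unitary_congruence[OF A W WW] unfolding C_def by simp
  then have "Re ((delete_first_row_col C *\<^sub>v z) \<bullet>c z) \<le> M * Re (z \<bullet>c z)"
    if "z \<in> carrier_vec N" for z
    using Suc.IH[of "delete_first_row_col C" z] hermitian_delete_first_row_col[OF herm_C C] C that
    by simp
  then have "Re ((C *\<^sub>v y) \<bullet>c y) \<le> M * Re (y \<bullet>c y)" if "y \<in> carrier_vec (Suc N)" for y
    using cscalar_form_bound_delete_first_row_col[OF C _ row \<open>r \<le> M\<close> _ that] col
    unfolding C_def by simp
  then show ?case
    using cscalar_form_bound_unitary_congruence[OF A W WW] Suc.prems(4) unfolding C_def by blast
qed

lemma hermitian_real_eigenvalues: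
  fixes A :: "complex mat"
  assumes A: "A \<in> carrier_mat N N" and "hermitian A" and "0 < N"
  shows "finite {r. eigenvalue A (complex_of_real r)}"
    and "{r. eigenvalue A (complex_of_real r)} \<noteq> {}"
proof -
  have "complex_of_real ` {r. eigenvalue A (complex_of_real r)} \<subseteq> spectrum A"
    unfolding spectrum_def by auto
  then show "finite {r. eigenvalue A (complex_of_real r)}"
    using card_finite_spectrum(1)[OF A]
    by (metis finite_imageD finite_subset inj_of_real inj_on_subset subset_UNIV)
  obtain e where "eigenvalue A e"
    using spectrum_non_empty[OF A \<open>0 < N\<close>] unfolding spectrum_def by auto
  then have "Re e \<in> {r. eigenvalue A (complex_of_real r)}"
    using hermitian_eigenvalue_real[OF assms(1,2)] by (metis mem_Collect_eq)
  then show "{r. eigenvalue A (complex_of_real r)} \<noteq> {}" by blast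
qed

section \<open>Cyclic windows and Schmidt rank\<close>

lemma card_filter_bij_betw:
  assumes "bij_betw f A B"
  shows "card {x \<in> A. f x \<in> S} = card (B \<inter> S)"
proof -
  have "bij_betw f {x \<in> A. f x \<in> S} (B \<inter> S)"
    using assms unfolding bij_betw_def inj_on_def by auto
  then show ?thesis by (rule bij_betw_same_card)
qed

lemma bij_betw_cyclic_shift:
  fixes m j :: nat
  assumes "j < m"
  shows "bij_betw (\<lambda>c. (c + m - j) mod m) {..<m} {..<m}"
proof -
  have "inj_on (\<lambda>c. (c + m - j) mod m) {..<m}"
  proof (rule inj_onI)
    fix c c' assume "c \<in> {..<m}" "c' \<in> {..<m}" "(c + m - j) mod m = (c' + m - j) mod m"
    then have "(c + m - j + j) mod m = (c' + m - j + j) mod m" by (metis mod_add_left_eq)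
    then show "c = c'" using assms \<open>c \<in> {..<m}\<close> \<open>c' \<in> {..<m}\<close> by simp
  qed
  moreover have "(\<lambda>c. (c + m - j) mod m) ` {..<m} \<subseteq> {..<m}" using assms by auto
  ultimately show ?thesis unfolding bij_betw_def using endo_inj_surj[of "{..<m}"] by blast
qed

lemma bij_betw_cyclic_reflection:
  fixes m c :: nat
  assumes "c < m"
  shows "bij_betw (\<lambda>j. (c + m - j) mod m) {..<m} {..<m}"
proof -
  have "inj_on (\<lambda>j. (c + m - j) mod m) {..<m}"
  proof (rule inj_onI)
    fix j j' assume j: "j \<in> {..<m}" "j' \<in> {..<m}" and eq: "(c + m - j) mod m = (c + m - j') mod m"
    have "(c + m - j + (j + j')) mod m = (c + m - j' + (j + j')) mod m"
      using eq by (metis mod_add_left_eq)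
    then have "(c + m + j') mod m = (c + m + j) mod m"
      using j by (simp add: algebra_simps)
    then have "(c + m + j' + (m - c)) mod m = (c + m + j + (m - c)) mod m"
      by (metis mod_add_left_eq)
    moreover have "c + m + i + (m - c) = i + m * 2" for i using assms by simp
    ultimately show "j = j'" using j by simp
  qed
  moreover have "(\<lambda>j. (c + m - j) mod m) ` {..<m} \<subseteq> {..<m}" using assms by auto
  ultimately show ?thesis unfolding bij_betw_def using endo_inj_surj[of "{..<m}"] by blast
qed

text \<open>The window of k cyclically consecutive column indices j, j+1, ..., j+k-1 modulo m.\<close>
definition cyclic_window :: "nat \<Rightarrow> nat \<Rightarrow> nat \<Rightarrow> nat set" where
  "cyclic_window m k j = {c. c < m \<and> (c + m - j) mod m < k}"

lemma card_cyclic_window: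
  assumes "j < m" "k \<le> m"
  shows "card (cyclic_window m k j) = k"
proof -
  have "card (cyclic_window m k j) = card {c \<in> {..<m}. (c + m - j) mod m \<in> {..<k}}"
    unfolding cyclic_window_def by (rule arg_cong[where f = card]) auto
  also have "\<dots> = k"
    using card_filter_bij_betw[OF bij_betw_cyclic_shift[OF assms(1)], of "{..<k}"] assms(2)
    by (simp add: Int_absorb1)
  finally show ?thesis .
qed

lemma card_cyclic_windows_containing:
  assumes "c < m" "k \<le> m"
  shows "card {j \<in> {..<m}. c \<in> cyclic_window m k j} = k"
proof -
  have "card {j \<in> {..<m}. c \<in> cyclic_window m k j} = card {j \<in> {..<m}. (c + m - j) mod m \<in> {..<k}}"
    using assms(1) unfolding cyclic_window_def by simp
  also have "\<dots> = k"
    using card_filter_bij_betw[OF bij_betw_cyclic_reflection[OF assms(1)], of "{..<k}"] assms(2)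
    by (simp add: Int_absorb1)
  finally show ?thesis .
qed

lemma sum_over_cyclic_windows:
  fixes z :: "'a :: semiring_1"
  assumes "c < m" "k \<le> m"
  shows "(\<Sum>j<m. if c \<in> cyclic_window m k j then z else 0) = of_nat k * z"
  using card_cyclic_windows_containing[OF assms]
  by (simp add: sum.If_cases Int_def)

lemma rank_le_card_nonzero_cols:
  fixes B :: "complex mat"
  assumes "finite S" "B \<in> carrier_mat n m" "\<And>i c. i < n \<Longrightarrow> c < m \<Longrightarrow> c \<notin> S \<Longrightarrow> B $$ (i,c) = 0"
  shows "vec_space.rank n B \<le> card S"
  using assms
proof (induction S arbitrary: B rule: finite_induct)
  case empty
  interpret vec_space "TYPE(complex)" n .
  have "B = 0\<^sub>m n m" using empty by (intro eq_matI) auto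
  then show ?case using rank_0I by simp
next
  case (insert c S)
  interpret vec_space "TYPE(complex)" n .
  define B1 where "B1 = mat n m (\<lambda>(i,c'). if c' = c then B $$ (i,c') else 0)"
  define B2 where "B2 = mat n m (\<lambda>(i,c'). if c' = c then 0 else B $$ (i,c'))"
  have "B = B1 + B2" using insert.prems by (intro eq_matI) (auto simp: B1_def B2_def)
  then have "rank B \<le> rank B1 + rank B2"
    using rank_subadditive[of B1 m B2] by (simp add: B1_def B2_def)
  moreover have "rank B1 \<le> 1"
    by (rule rank_le_1_product_entries[of B1 m "\<lambda>i. B $$ (i,c)" "\<lambda>c'. if c' = c then 1 else 0"])
      (auto simp: B1_def)
  moreover have "rank B2 \<le> card S"
    by (rule insert.IH) (use insert.prems in \<open>auto simp: B2_def\<close>)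
  ultimately show ?case using insert.hyps by simp
qed

lemma schmidt_rank_le_card_support:
  assumes "finite S" "\<And>p. p < n * m \<Longrightarrow> p mod m \<notin> S \<Longrightarrow> v $ p = 0"
  shows "schmidt_rank n m v \<le> card S"
  unfolding schmidt_rank_def
proof (rule rank_le_card_nonzero_cols[OF assms(1)])
  fix i c assume i: "i < n" and c: "c < m" "c \<notin> S"
  have "i * m + c < Suc i * m" using c by simp
  also have "\<dots> \<le> n * m" using i by (intro mult_le_mono1) simp
  finally have "i * m + c < n * m" .
  then show "coeff_mat n m v $$ (i, c) = 0"
    using assms(2)[of "i * m + c"] i c by (simp add: coeff_mat_def)
qed (simp add: coeff_mat_def)

text \<open>The form (K a, b) on coordinate functions rather than vectors, so that sums of vectors
  are pointwise sums of functions.\<close>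
definition sesq_form :: "complex mat \<Rightarrow> (nat \<Rightarrow> complex) \<Rightarrow> (nat \<Rightarrow> complex) \<Rightarrow> complex" where
  "sesq_form K a b = (\<Sum>p<dim_row K. \<Sum>q<dim_row K. K $$ (p,q) * a q * cnj (b p))"

lemma sesq_form_diff:
  "sesq_form K (\<lambda>q. a q - b q) (\<lambda>q. a q - b q) =
    sesq_form K a a - sesq_form K a b - sesq_form K b a + sesq_form K b b"
  unfolding sesq_form_def by (simp add: algebra_simps sum_subtractf sum.distrib)

lemma sesq_form_sum:
  "sesq_form K (\<lambda>q. \<Sum>j<M. f j q) (\<lambda>p. \<Sum>l<M. g l p) = (\<Sum>j<M. \<Sum>l<M. sesq_form K (f j) (g l))"
proof -
  have "sesq_form K (\<lambda>q. \<Sum>j<M. f j q) (\<lambda>p. \<Sum>l<M. g l p) =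
      (\<Sum>p<dim_row K. \<Sum>q<dim_row K. \<Sum>l<M. \<Sum>j<M. K $$ (p,q) * f j q * cnj (g l p))"
    unfolding sesq_form_def by (simp add: sum_distrib_left sum_distrib_right mult.assoc)
  also have "\<dots> = (\<Sum>l<M. \<Sum>j<M. \<Sum>p<dim_row K. \<Sum>q<dim_row K. K $$ (p,q) * f j q * cnj (g l p))"
    by (simp only: sum.swap[of _ "{..<dim_row K}" "{..<M}"])
  also have "\<dots> = (\<Sum>j<M. \<Sum>l<M. sesq_form K (f j) (g l))"
    unfolding sesq_form_def by (rule sum.swap)
  finally show ?thesis .
qed

lemma sesq_form_scale: "sesq_form K (\<lambda>q. c * a q) (\<lambda>q. c * a q) = c * cnj c * sesq_form K a a"
  unfolding sesq_form_def by (simp add: sum_distrib_left mult_ac)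

text \<open>Expand the nonnegative sum, over all pairs j, l, of the form at a_j - a_l.\<close>
lemma sesq_form_sum_le:
  assumes psd: "\<And>f. Re (sesq_form K f f) \<ge> 0"
  shows "Re (sesq_form K (\<lambda>q. \<Sum>j<M. a j q) (\<lambda>q. \<Sum>j<M. a j q)) \<le>
    real M * (\<Sum>j<M. Re (sesq_form K (a j) (a j)))"
proof -
  define T where "T = (\<Sum>j<M. sesq_form K (a j) (a j))"
  define P where "P = (\<Sum>j<M. \<Sum>l<M. sesq_form K (a j) (a l))"
  have swap: "(\<Sum>j<M. \<Sum>l<M. sesq_form K (a l) (a j)) = P"
    unfolding P_def by (rule sum.swap)
  have "(\<Sum>j<M. \<Sum>l<M. sesq_form K (\<lambda>q. a j q - a l q) (\<lambda>q. a j q - a l q)) =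
      of_nat M * T - P - P + of_nat M * T"
    unfolding sesq_form_diff
    by (simp only: sum.distrib sum_subtractf swap) (simp add: P_def T_def sum_distrib_left)
  moreover have "Re (\<Sum>j<M. \<Sum>l<M. sesq_form K (\<lambda>q. a j q - a l q) (\<lambda>q. a j q - a l q)) \<ge> 0"
    by (simp add: psd sum_nonneg)
  ultimately have "Re P \<le> real M * Re T" by (simp add: mult.commute)
  then show ?thesis unfolding P_def T_def sesq_form_sum by simp
qed

definition window_restriction :: "nat \<Rightarrow> nat \<Rightarrow> nat \<Rightarrow> complex vec \<Rightarrow> nat \<Rightarrow> complex" where
  "window_restriction m k j v p = (if p mod m \<in> cyclic_window m k j then v $ p else 0)"

lemma schmidt_rank_window_restriction:
  assumes "j < m" "k \<le> m"
  shows "schmidt_rank n m (vec (n * m) (window_restriction m k j v)) \<le> k"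
proof -
  have "schmidt_rank n m (vec (n * m) (window_restriction m k j v)) \<le> card (cyclic_window m k j)"
    by (rule schmidt_rank_le_card_support) (auto simp: cyclic_window_def window_restriction_def)
  then show ?thesis using card_cyclic_window[OF assms] by simp
qed

lemma sum_window_restrictions:
  assumes "0 < m" "k \<le> m"
  shows "(\<Sum>j<m. window_restriction m k j v p) = of_nat k * v $ p"
  unfolding window_restriction_def using assms by (simp add: sum_over_cyclic_windows)

lemma sum_window_restriction_norms:
  assumes "0 < m" "k \<le> m" "v \<in> carrier_vec N"
  shows "(\<Sum>j<m. vec N (window_restriction m k j v) \<bullet>c vec N (window_restriction m k j v)) =
    of_nat k * (v \<bullet>c v)"
proof -
  have "(\<Sum>j<m. vec N (window_restriction m k j v) \<bullet>c vec N (window_restriction m k j v)) =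
      (\<Sum>p<N. \<Sum>j<m. if p mod m \<in> cyclic_window m k j then v $ p * cnj (v $ p) else 0)"
    by (simp add: cscalar_prod_sum window_restriction_def sum.swap[of _ "{..<m}"] if_distrib
        cong: if_cong)
  also have "\<dots> = of_nat k * (v \<bullet>c v)"
    using assms by (simp add: sum_over_cyclic_windows cscalar_prod_sum sum_distrib_left)
  finally show ?thesis .
qed

lemma sesq_form_shifted:
  fixes X :: "complex mat"
  assumes X: "X \<in> carrier_mat N N"
  shows "sesq_form (a \<cdot>\<^sub>m 1\<^sub>m N - X) f f = a * (vec N f \<bullet>c vec N f) - (X *\<^sub>v vec N f) \<bullet>c vec N f"
proof -
  have "sesq_form (a \<cdot>\<^sub>m 1\<^sub>m N - X) f f =
      (\<Sum>p<N. \<Sum>q<N. (if p = q then a * f q * cnj (f p) else 0) - X $$ (p,q) * f q * cnj (f p))"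
    unfolding sesq_form_def using X by (intro sum.cong) (auto simp: algebra_simps)
  also have "\<dots> = (\<Sum>p<N. a * f p * cnj (f p)) - (\<Sum>p<N. \<Sum>q<N. X $$ (p,q) * f q * cnj (f p))"
    by (simp add: sum_subtractf)
  also have "\<dots> = a * (vec N f \<bullet>c vec N f) - (X *\<^sub>v vec N f) \<bullet>c vec N f"
    by (subst cscalar_form_sum[OF X]) (auto simp: cscalar_prod_sum sum_distrib_left mult.assoc)
  finally show ?thesis .
qed

lemma block_positive_eigenvalue_gap:
  fixes X :: "complex mat"
  assumes X: "X \<in> carrier_mat (n * m) (n * m)" and kbp: "k_block_positive n m k X"
    and k: "0 < k" "k \<le> m"
    and bound: "\<And>u. u \<in> carrier_vec (n * m) \<Longrightarrow> Re ((X *\<^sub>v u) \<bullet>c u) \<le> lmax * Re (u \<bullet>c u)"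
    and ev: "eigenvalue X (complex_of_real lmin)"
  shows "real k * (lmax - lmin) \<le> real m * lmax"
proof -
  define N where "N = n * m"
  define K where "K = complex_of_real lmax \<cdot>\<^sub>m 1\<^sub>m N - X"
  obtain v where v: "v \<in> carrier_vec N" "v \<noteq> 0\<^sub>v N" "X *\<^sub>v v = complex_of_real lmin \<cdot>\<^sub>v v"
    using ev X unfolding eigenvalue_def eigenvector_def N_def by auto
  define w where "w j = window_restriction m k j v" for j
  define nv where "nv = Re (v \<bullet>c v)"
  note Q = sesq_form_shifted[OF X[folded N_def], of "complex_of_real lmax", folded K_def]
  have "0 < m" using k by simp
  have vec_v: "vec N (($) v) = v" using v(1) by auto
  have Qv: "sesq_form K (($) v) (($) v) = complex_of_real (lmax - lmin) * (v \<bullet>c v)"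
    using v unfolding Q vec_v by (simp add: algebra_simps)
  have "(real k * nv) * (real k * (lmax - lmin)) =
      Re (sesq_form K (\<lambda>p. \<Sum>j<m. w j p) (\<lambda>p. \<Sum>j<m. w j p))"
    unfolding w_def sum_window_restrictions[OF \<open>0 < m\<close> k(2)] sesq_form_scale Qv
    by (simp add: nv_def)
  also have "\<dots> \<le> real m * (\<Sum>j<m. Re (sesq_form K (w j) (w j)))"
  proof (rule sesq_form_sum_le)
    show "Re (sesq_form K f f) \<ge> 0" for f
      using bound[of "vec N f"] unfolding Q N_def by simp
  qed
  also have "\<dots> \<le> real m * (\<Sum>j<m. lmax * Re (vec N (w j) \<bullet>c vec N (w j)))"
  proof (intro mult_left_mono sum_mono)
    fix j assume "j \<in> {..<m}"
    then show "Re (sesq_form K (w j) (w j)) \<le> lmax * Re (vec N (w j) \<bullet>c vec N (w j))"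
      using kbp schmidt_rank_window_restriction[OF _ k(2), of j n v]
      unfolding Q k_block_positive_def w_def N_def by auto
  qed simp
  also have "\<dots> = (real k * nv) * (real m * lmax)"
    using sum_window_restriction_norms[OF \<open>0 < m\<close> k(2) v(1)]
    by (simp add: w_def nv_def flip: sum_distrib_left Re_sum)
  finally have "(real k * nv) * (real k * (lmax - lmin)) \<le> (real k * nv) * (real m * lmax)" .
  moreover have "0 < nv"
    using conjugate_square_greater_0_vec[OF v(1)] v(2) by (simp add: nv_def less_complex_def)
  ultimately show ?thesis using k by (simp add: mult_le_cancel_left_pos)
qed

text \<open>For lmax \<le> 0 the bound holds because 1 - m / k \<le> 0, while lmin / lmax \<ge> 1, or = 0 when
  lmax = 0 (x / 0 = 0).\<close>
lemma ratio_bound_from_gap: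
  fixes k m lmin lmax :: real
  assumes "0 < k" "k \<le> m" "lmin \<le> lmax" "k * (lmax - lmin) \<le> m * lmax"
  shows "1 - m / k \<le> lmin / lmax"
proof (cases "lmax > 0")
  case True
  have "1 - m / k = (k * lmax - m * lmax) / (k * lmax)"
    using True assms(1) by (simp add: field_simps)
  also have "\<dots> \<le> (k * lmin) / (k * lmax)"
    using assms True by (intro divide_right_mono) (auto simp: algebra_simps)
  finally show ?thesis using assms(1) by simp
next
  case False
  then have "lmin / lmax \<ge> 0 \<or> lmin / lmax \<ge> 1"
    using assms(3) by (cases "lmax = 0") auto
  moreover have "1 - m / k \<le> 0" using assms(1,2) by simp
  ultimately show ?thesis by linarith
qed

theorem corollary5p5:
  fixes n m k :: nat and X :: "complex mat"
  assumes "m \<le> n" and "1 \<le> k" and "k \<le> m"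
    and "X \<in> carrier_mat (n * m) (n * m)"
    and "hermitian X"
    and "X \<noteq> 0\<^sub>m (n * m) (n * m)"
    and "k_block_positive n m k X"
  shows "lambda_min X / lambda_max X \<ge> 1 - real m / real k"
proof -
  let ?E = "{r. eigenvalue X (complex_of_real r)}"
  have "0 < n * m" using assms(1-3) by simp
  note E = hermitian_real_eigenvalues[OF assms(4,5) this]
  have "lambda_min X \<in> ?E"
    unfolding lambda_min_def using E by (rule Min_in)
  moreover have "lambda_min X \<le> lambda_max X"
    unfolding lambda_max_def using E(1) \<open>lambda_min X \<in> ?E\<close> by (rule Max_ge)
  moreover have "Re ((X *\<^sub>v u) \<bullet>c u) \<le> lambda_max X * Re (u \<bullet>c u)" if "u \<in> carrier_vec (n * m)" for u
    using hermitian_cscalar_form_le[OF assms(4,5) _ that] E unfolding lambda_max_def by simp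
  ultimately have "real k * (lambda_max X - lambda_min X) \<le> real m * lambda_max X"
    using block_positive_eigenvalue_gap[OF assms(4,7)] assms(2,3) by simp
  then show ?thesis
    using ratio_bound_from_gap[of "real k" "real m"] assms(2,3) \<open>lambda_min X \<le> lambda_max X\<close> by simp
qed

end
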